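(* Let $\nu>0$, $\tau>0$, $A>0$, $N\ge2$, and let $h^n$ ($n\ge0$) be generated by the MBE scheme $h^0=\Pi_Nh_0$, $\frac{h^{n+1}-h^n}{\tau}=-\nu\Delta^2h^{n+1}+A\Delta(h^{n+1}-h^n)+\Pi_N\nabla\cdot(g(\nabla h^n))$ with $h_0$ of mean zero. Then for every $n\ge0$, with $E_n=E(h^n)$, $$E_{n+1}-E_n+\Big(A+\frac12+\sqrt{\frac{2\nu}\tau}\Big)\|\nabla(h^{n+1}-h^n)\|_2^2\le\|\nabla(h^{n+1}-h^n)\|_2^2\cdot\frac32\max\{\|\nabla h^n\|_\infty^2,\|\nabla h^{n+1}\|_\infty^2\}.$$
   Context: $\mathbb T^2=\mathbb R^2/2\pi\mathbb Z^2$; $g(z)=(|z|^2-1)z$, $G(z)=\frac14(|z|^2-1)^2$; $E(h)=\frac\nu2\|\Delta h\|_2^2+\int_{\mathbb T^2}G(\nabla h)dx$; $\Pi_N$ is the $L^2$-orthogonal projection onto $X_N=\operatorname{span}\{\cos(k\cdot x),\sin(k\cdot x):|k|\le N\}$. *)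

theory Defs
  imports "HOL-Analysis.Analysis"
begin

text \<open>Functions on the torus T^2 = R^2 / 2 pi Z^2 are represented as 2 pi-periodic
  functions on real^2; integrals over T^2 are integrals over the fundamental box.\<close>

definition torus_box :: "(real^2) set" where
  "torus_box = cbox 0 (\<chi> i. 2 * pi)"

definition periodic2 :: "(real^2 \<Rightarrow> 'a) \<Rightarrow> bool" where
  "periodic2 f \<longleftrightarrow> (\<forall>x i. f (x + (2 * pi) *\<^sub>R axis i 1) = f x)"

definition tint :: "(real^2 \<Rightarrow> real) \<Rightarrow> real" where
  "tint f = integral torus_box f"

definition pd :: "2 \<Rightarrow> (real^2 \<Rightarrow> real) \<Rightarrow> real^2 \<Rightarrow> real" where
  "pd i f x = deriv (\<lambda>t. f (x + t *\<^sub>R axis i 1)) 0"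

definition grad :: "(real^2 \<Rightarrow> real) \<Rightarrow> real^2 \<Rightarrow> real^2" where
  "grad f x = (\<chi> i. pd i f x)"

definition dvg :: "(real^2 \<Rightarrow> real^2) \<Rightarrow> real^2 \<Rightarrow> real" where
  "dvg F x = (\<Sum>i\<in>UNIV. pd i (\<lambda>y. F y $ i) x)"

definition lap :: "(real^2 \<Rightarrow> real) \<Rightarrow> real^2 \<Rightarrow> real" where
  "lap f = dvg (grad f)"

definition gnl :: "real^2 \<Rightarrow> real^2" where
  "gnl z = ((norm z)^2 - 1) *\<^sub>R z"

definition Gpot :: "real^2 \<Rightarrow> real" where
  "Gpot z = ((norm z)^2 - 1)^2 / 4"

definition energy :: "real \<Rightarrow> (real^2 \<Rightarrow> real) \<Rightarrow> real" where
  "energy \<nu> h = \<nu> / 2 * tint (\<lambda>x. (lap h x)^2) + tint (\<lambda>x. Gpot (grad h x))"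

definition grad_L2sq :: "(real^2 \<Rightarrow> real) \<Rightarrow> real" where
  "grad_L2sq f = tint (\<lambda>x. (norm (grad f x))^2)"

definition grad_Linf :: "(real^2 \<Rightarrow> real) \<Rightarrow> real" where
  "grad_Linf f = (SUP x\<in>UNIV. norm (grad f x))"

definition lattice_pts :: "nat \<Rightarrow> (real^2) set" where
  "lattice_pts N = {k. (\<forall>i. k $ i \<in> \<int>) \<and> norm k \<le> real N}"

definition XN :: "nat \<Rightarrow> (real^2 \<Rightarrow> real) set" where
  "XN N = {f. \<exists>a b :: real^2 \<Rightarrow> real.
      f = (\<lambda>x. \<Sum>k\<in>lattice_pts N. a k * cos (k \<bullet> x) + b k * sin (k \<bullet> x))}"

definition PiN :: "nat \<Rightarrow> (real^2 \<Rightarrow> real) \<Rightarrow> (real^2 \<Rightarrow> real)" where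
  "PiN N f = (THE p. p \<in> XN N \<and> (\<forall>q\<in>XN N. tint (\<lambda>x. (f x - p x) * q x) = 0))"

end

theory Submission
  imports Defs
begin

text \<open>Testing the scheme with the increment d = h(n+1) - h(n), which lies in X_N so that the
  projection Pi_N drops out, and integrating by parts gives
    ||d||^2 / tau = - nu <Lap h(n+1), Lap d> - A ||grad d||^2 - <g(grad h(n)), grad d>.
  On the other hand nu/2 ||Lap h||^2 changes by nu <Lap h(n+1), Lap d> - nu/2 ||Lap d||^2, and the
  quartic potential obeys the one-sided Taylor bound
    G(w) - G(z) <= g(z) . (w - z) + (3M/2 - 1/2) |w - z|^2   whenever |z|^2, |w|^2 <= M.
  Adding these, the cross terms cancel, and ||d||^2/tau + nu/2 ||Lap d||^2 >= sqrt(2 nu/tau) ||grad d||^2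
  by AM-GM, because ||grad d||^2 = - <Lap d, d>.

  All functions involved are trigonometric polynomials, so differentiation, integration by parts
  and the existence of Pi_N are handled inside that algebra.\<close>

section \<open>Trigonometric polynomials\<close>

inductive_set trig_poly :: "(real^2 \<Rightarrow> real) set" where
  const: "(\<lambda>x. c) \<in> trig_poly"
| cos: "(\<forall>i. k $ i \<in> \<int>) \<Longrightarrow> (\<lambda>x. cos (k \<bullet> x)) \<in> trig_poly"
| sin: "(\<forall>i. k $ i \<in> \<int>) \<Longrightarrow> (\<lambda>x. sin (k \<bullet> x)) \<in> trig_poly"
| add: "f \<in> trig_poly \<Longrightarrow> g \<in> trig_poly \<Longrightarrow> (\<lambda>x. f x + g x) \<in> trig_poly"
| mult: "f \<in> trig_poly \<Longrightarrow> g \<in> trig_poly \<Longrightarrow> (\<lambda>x. f x * g x) \<in> trig_poly"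

lemma trig_poly_cmult: "f \<in> trig_poly \<Longrightarrow> (\<lambda>x. c * f x) \<in> trig_poly"
  using trig_poly.mult[OF trig_poly.const] by blast

lemma trig_poly_diff: "f \<in> trig_poly \<Longrightarrow> g \<in> trig_poly \<Longrightarrow> (\<lambda>x. f x - g x) \<in> trig_poly"
  using trig_poly.add[OF _ trig_poly_cmult[of g "-1"]] by simp

lemma trig_poly_power: "f \<in> trig_poly \<Longrightarrow> (\<lambda>x. f x ^ n) \<in> trig_poly"
  by (induction n) (auto intro: trig_poly.intros)

lemma trig_poly_sum:
  "(\<And>i. i \<in> I \<Longrightarrow> F i \<in> trig_poly) \<Longrightarrow> (\<lambda>x. \<Sum>i\<in>I. F i x) \<in> trig_poly"
proof (induction I rule: infinite_finite_induct)
  case (insert i I)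
  then show ?case using trig_poly.add[of "F i"] by simp
qed (auto intro: trig_poly.const)

lemma continuous_on_trig_poly: "f \<in> trig_poly \<Longrightarrow> continuous_on UNIV f"
  by (induction rule: trig_poly.induct) (auto intro!: continuous_intros)

lemma trig_poly_bounded: "f \<in> trig_poly \<Longrightarrow> \<exists>B. \<forall>x. \<bar>f x\<bar> \<le> B"
proof (induction rule: trig_poly.induct)
  case (add f g)
  then obtain B C where "\<forall>x. \<bar>f x\<bar> \<le> B" "\<forall>x. \<bar>g x\<bar> \<le> C" by blast
  then show ?case by (intro exI[of _ "B + C"] allI) (metis abs_triangle_ineq add_mono order_trans)
next
  case (mult f g)
  then obtain B C where "\<forall>x. \<bar>f x\<bar> \<le> B" "\<forall>x. \<bar>g x\<bar> \<le> C" by blast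
  then show ?case by (intro exI[of _ "B * C"]) (simp add: abs_mult mult_mono')
qed (auto intro: abs_cos_le_one abs_sin_le_one)

lemma trig_poly_periodic_int:
  assumes "f \<in> trig_poly"
  shows "f (x + (2 * pi * of_int m) *\<^sub>R axis i 1) = f x"
  using assms
proof (induction rule: trig_poly.induct)
  case (cos k)
  then obtain z where "k $ i = of_int z" by (metis Ints_cases)
  then have "k \<bullet> (x + (2 * pi * of_int m) *\<^sub>R axis i 1) = k \<bullet> x + 2 * pi * of_int (z * m)"
    by (simp add: inner_add_right inner_axis)
  then show ?case by (simp only: cos_add cos_int_2pin sin_int_2pin)
next
  case (sin k)
  then obtain z where "k $ i = of_int z" by (metis Ints_cases)
  then have "k \<bullet> (x + (2 * pi * of_int m) *\<^sub>R axis i 1) = k \<bullet> x + 2 * pi * of_int (z * m)"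
    by (simp add: inner_add_right inner_axis)
  then show ?case by (simp only: sin_add cos_int_2pin sin_int_2pin)
qed auto

lemma trig_poly_value_in_torus_box:
  assumes "f \<in> trig_poly"
  shows "\<exists>y\<in>torus_box. f y = f x"
proof -
  define m where "m j = \<lfloor>x $ j / (2 * pi)\<rfloor>" for j
  define y where "y = (x + (2 * pi * of_int (- m 1)) *\<^sub>R axis 1 1) + (2 * pi * of_int (- m 2)) *\<^sub>R axis 2 1"
  have "f y = f x"
    unfolding y_def by (simp only: trig_poly_periodic_int[OF assms])
  moreover have "y $ j = x $ j - 2 * pi * m j" for j
    using exhaust_2[of j] by (auto simp: y_def axis_def)
  moreover have "0 \<le> x $ j - 2 * pi * m j" "x $ j - 2 * pi * m j \<le> 2 * pi" for j
  proof -
    have "m j \<le> x $ j / (2 * pi)" "x $ j / (2 * pi) < m j + 1"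
      unfolding m_def by linarith+
    then show "0 \<le> x $ j - 2 * pi * m j" "x $ j - 2 * pi * m j \<le> 2 * pi"
      by (simp_all add: field_simps)
  qed
  ultimately show ?thesis
    by (intro bexI[of _ y]) (auto simp: torus_box_def mem_box_cart)
qed

text \<open>\<open>pd\<close> is defined through \<open>deriv\<close>, which has junk values off differentiable points;
  derivatives are computed with the relational \<open>has_pd\<close> instead.\<close>

definition has_pd :: "2 \<Rightarrow> (real^2 \<Rightarrow> real) \<Rightarrow> (real^2 \<Rightarrow> real) \<Rightarrow> bool" where
  "has_pd i f g \<longleftrightarrow> (\<forall>x. ((\<lambda>t. f (x + t *\<^sub>R axis i 1)) has_real_derivative g x) (at 0))"

lemma has_pd_imp_pd_eq: "has_pd i f g \<Longrightarrow> pd i f = g"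
  unfolding has_pd_def pd_def by (auto intro!: ext DERIV_imp_deriv)

lemma trig_poly_has_pd: "f \<in> trig_poly \<Longrightarrow> \<exists>g\<in>trig_poly. has_pd i f g"
proof (induction rule: trig_poly.induct)
  case (cos k)
  have "has_pd i (\<lambda>x. cos (k \<bullet> x)) (\<lambda>x. - (k $ i) * sin (k \<bullet> x))"
    unfolding has_pd_def inner_add_right inner_scaleR_right inner_axis
    by (auto intro!: derivative_eq_intros)
  then show ?case using trig_poly_cmult[OF trig_poly.sin[OF cos]] by blast
next
  case (sin k)
  have "has_pd i (\<lambda>x. sin (k \<bullet> x)) (\<lambda>x. k $ i * cos (k \<bullet> x))"
    unfolding has_pd_def inner_add_right inner_scaleR_right inner_axis
    by (auto intro!: derivative_eq_intros)
  then show ?case using trig_poly_cmult[OF trig_poly.cos[OF sin]] by blast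
next
  case (add f g)
  then obtain f' g' where "f' \<in> trig_poly" "g' \<in> trig_poly" "has_pd i f f'" "has_pd i g g'" by blast
  then show ?case unfolding has_pd_def
    by (auto intro!: bexI[of _ "\<lambda>x. f' x + g' x"] trig_poly.add derivative_eq_intros)
next
  case (mult f g)
  then obtain f' g' where "f' \<in> trig_poly" "g' \<in> trig_poly" "has_pd i f f'" "has_pd i g g'" by blast
  then show ?case unfolding has_pd_def
    by (auto intro!: bexI[of _ "\<lambda>x. f' x * g x + f x * g' x"] trig_poly.intros mult
        derivative_eq_intros)
qed (auto simp: has_pd_def intro!: bexI[of _ "\<lambda>x. 0"] trig_poly.const)

lemma pd_trig_poly: "f \<in> trig_poly \<Longrightarrow> pd i f \<in> trig_poly"
  using trig_poly_has_pd[of f i] has_pd_imp_pd_eq by blast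

lemma trig_poly_has_pd_pd: "f \<in> trig_poly \<Longrightarrow> has_pd i f (pd i f)"
  using trig_poly_has_pd[of f i] has_pd_imp_pd_eq by blast

lemma pd_mult:
  "f \<in> trig_poly \<Longrightarrow> g \<in> trig_poly \<Longrightarrow> pd i (\<lambda>x. f x * g x) = (\<lambda>x. pd i f x * g x + f x * pd i g x)"
  using trig_poly_has_pd_pd[of f i] trig_poly_has_pd_pd[of g i]
  by (intro has_pd_imp_pd_eq) (auto simp: has_pd_def intro!: derivative_eq_intros)

lemma pd_diff:
  "f \<in> trig_poly \<Longrightarrow> g \<in> trig_poly \<Longrightarrow> pd i (\<lambda>x. f x - g x) = (\<lambda>x. pd i f x - pd i g x)"
  using trig_poly_has_pd_pd[of f i] trig_poly_has_pd_pd[of g i]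
  by (intro has_pd_imp_pd_eq) (auto simp: has_pd_def intro!: derivative_eq_intros)

definition trig_field :: "(real^2 \<Rightarrow> real^2) set" where
  "trig_field = {F. \<forall>i. (\<lambda>x. F x $ i) \<in> trig_poly}"

lemma grad_trig_field: "f \<in> trig_poly \<Longrightarrow> grad f \<in> trig_field"
  by (simp add: trig_field_def grad_def pd_trig_poly)

lemma inner_trig_poly:
  "F \<in> trig_field \<Longrightarrow> H \<in> trig_field \<Longrightarrow> (\<lambda>x. F x \<bullet> H x) \<in> trig_poly"
  unfolding inner_vec_def inner_real_def trig_field_def by (intro trig_poly_sum trig_poly.mult) auto

lemma dvg_trig_poly: "F \<in> trig_field \<Longrightarrow> dvg F \<in> trig_poly"
  unfolding dvg_def trig_field_def by (intro trig_poly_sum pd_trig_poly) auto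

lemma lap_trig_poly: "f \<in> trig_poly \<Longrightarrow> lap f \<in> trig_poly"
  unfolding lap_def by (intro dvg_trig_poly grad_trig_field)

lemma grad_diff:
  "f \<in> trig_poly \<Longrightarrow> g \<in> trig_poly \<Longrightarrow> grad (\<lambda>x. f x - g x) x = grad f x - grad g x"
  by (simp add: grad_def pd_diff vec_eq_iff)

lemma lap_diff:
  assumes "f \<in> trig_poly" "g \<in> trig_poly"
  shows "lap (\<lambda>x. f x - g x) x = lap f x - lap g x"
proof -
  have "pd i (\<lambda>y. grad (\<lambda>x. f x - g x) y $ i) = (\<lambda>y. pd i (pd i f) y - pd i (pd i g) y)" for i
    using assms by (simp add: grad_def pd_diff pd_trig_poly)
  then show ?thesis
    by (simp add: lap_def dvg_def grad_def sum_subtractf)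
qed

lemma gnl_grad_trig_field: "f \<in> trig_poly \<Longrightarrow> (\<lambda>x. gnl (grad f x)) \<in> trig_field"
proof -
  assume f: "f \<in> trig_poly"
  have "(\<lambda>x. gnl (grad f x) $ i) = (\<lambda>x. ((grad f x \<bullet> grad f x) - 1) * pd i f x)" for i
    by (simp add: gnl_def grad_def power2_norm_eq_inner)
  moreover have "(\<lambda>x. ((grad f x \<bullet> grad f x) - 1) * pd i f x) \<in> trig_poly" for i
    using f by (intro trig_poly.mult trig_poly_diff inner_trig_poly grad_trig_field
        pd_trig_poly trig_poly.const)
  ultimately show ?thesis by (simp add: trig_field_def)
qed

section \<open>Integration over the torus\<close>

definition vec2_of_pair :: "real \<times> real \<Rightarrow> real^2" where
  "vec2_of_pair p = fst p *\<^sub>R axis 1 1 + snd p *\<^sub>R axis 2 1"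

definition pair_of_vec2 :: "real^2 \<Rightarrow> real \<times> real" where
  "pair_of_vec2 v = (v $ 1, v $ 2)"

lemma vec2_of_pair_nth [simp]: "vec2_of_pair p $ 1 = fst p" "vec2_of_pair p $ 2 = snd p"
  by (auto simp: vec2_of_pair_def axis_def)

lemma pair_of_vec2_inverse [simp]: "pair_of_vec2 (vec2_of_pair p) = p"
  by (simp add: pair_of_vec2_def)

lemma vec2_of_pair_inverse [simp]: "vec2_of_pair (pair_of_vec2 v) = v"
  by (simp add: vec_eq_iff forall_2 pair_of_vec2_def)

lemma vec2_of_pair_image_cbox: "vec2_of_pair ` cbox u v = cbox (vec2_of_pair u) (vec2_of_pair v)"
proof -
  have "y \<in> vec2_of_pair ` cbox u v \<longleftrightarrow> pair_of_vec2 y \<in> cbox u v" for y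
    by (metis vec2_of_pair_inverse pair_of_vec2_inverse image_iff)
  then show ?thesis
    by (cases u; cases v) (auto simp: mem_box_cart forall_2 pair_of_vec2_def cbox_Pair_eq)
qed

lemma pair_of_vec2_image_cbox: "pair_of_vec2 ` cbox u v = cbox (pair_of_vec2 u) (pair_of_vec2 v)"
proof -
  have "y \<in> pair_of_vec2 ` cbox u v \<longleftrightarrow> vec2_of_pair y \<in> cbox u v" for y
    by (metis vec2_of_pair_inverse pair_of_vec2_inverse image_iff)
  then show ?thesis
    by (cases u; cases v) (auto simp: mem_box_cart forall_2 pair_of_vec2_def cbox_Pair_eq)
qed

lemma content_vec2_of_pair_image:
  "measure lborel (vec2_of_pair ` cbox u v) = 1 * measure lborel (cbox u v)"
proof (cases "cbox u v = {}")
  case False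
  then have ne: "cbox (vec2_of_pair u) (vec2_of_pair v) \<noteq> {}"
    by (metis vec2_of_pair_image_cbox image_is_empty)
  obtain u1 u2 v1 v2 where uv: "u = (u1, u2)" "v = (v1, v2)" by (cases u; cases v)
  have "u1 \<le> v1" "u2 \<le> v2" using False uv by (auto simp: cbox_Pair_eq)
  then show ?thesis using ne unfolding vec2_of_pair_image_cbox
    by (simp add: content_cbox_cart sum_2 UNIV_2 uv content_Pair content_real)
qed simp

lemma tint_iterated:
  assumes "continuous_on UNIV F"
  shows "tint F = integral {0..2*pi} (\<lambda>x. integral {0..2*pi} (\<lambda>y. F (vec2_of_pair (x, y))))"
proof -
  have "(F has_integral tint F) torus_box"
    unfolding tint_def torus_box_def
    by (intro integrable_integral integrable_continuous continuous_on_subset[OF assms]) auto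
  then have "((\<lambda>x. F (vec2_of_pair x)) has_integral (1/1) *\<^sub>R tint F) (pair_of_vec2 ` torus_box)"
    unfolding torus_box_def
  proof (rule has_integral_twiddle[where r=1, rotated -1])
    show "\<exists>w z. vec2_of_pair ` cbox u v = cbox w z" for u v
      using vec2_of_pair_image_cbox by blast
    show "\<exists>w z. pair_of_vec2 ` cbox u v = cbox w z" for u v
      using pair_of_vec2_image_cbox by blast
    show "isCont vec2_of_pair x" for x
      unfolding vec2_of_pair_def by (intro continuous_intros)
    show "measure lborel (vec2_of_pair ` cbox u v) = 1 * measure lborel (cbox u v)" for u v
      by (rule content_vec2_of_pair_image)
  qed auto
  moreover have "pair_of_vec2 ` torus_box = cbox (0, 0) (2 * pi, 2 * pi)"
    unfolding torus_box_def pair_of_vec2_image_cbox by (simp add: pair_of_vec2_def)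
  ultimately have "tint F = integral (cbox (0, 0) (2 * pi, 2 * pi)) (\<lambda>x. F (vec2_of_pair x))"
    by (simp add: integral_unique)
  also have "\<dots> = integral (cbox 0 (2 * pi)) (\<lambda>x. integral (cbox 0 (2 * pi)) (\<lambda>y. F (vec2_of_pair (x, y))))"
    by (intro integral_prod_continuous continuous_on_compose2[OF assms])
      (auto simp: vec2_of_pair_def intro!: continuous_intros)
  finally show ?thesis by simp
qed

lemma integral_pd_over_period_eq_0:
  assumes "f \<in> trig_poly"
  shows "integral {0..2*pi} (\<lambda>t. pd i f (p + t *\<^sub>R axis i 1)) = 0"
proof -
  have deriv: "((\<lambda>s. f (p + s *\<^sub>R axis i 1)) has_real_derivative pd i f (p + t *\<^sub>R axis i 1)) (at t)" for t
  proof -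
    have "((\<lambda>s. f ((p + t *\<^sub>R axis i 1) + s *\<^sub>R axis i 1)) has_real_derivative
        pd i f (p + t *\<^sub>R axis i 1)) (at 0)"
      using trig_poly_has_pd_pd[OF assms] unfolding has_pd_def by blast
    then show ?thesis
      using DERIV_shift[of "\<lambda>s. f (p + s *\<^sub>R axis i 1)" _ 0 t] by (simp add: algebra_simps)
  qed
  have "((\<lambda>t. pd i f (p + t *\<^sub>R axis i 1)) has_integral
      f (p + (2 * pi) *\<^sub>R axis i 1) - f (p + 0 *\<^sub>R axis i 1)) {0..2*pi}"
    by (intro fundamental_theorem_of_calculus)
      (auto simp: has_real_derivative_iff_has_vector_derivative[symmetric]
        intro!: has_field_derivative_at_within deriv)
  moreover have "f (p + (2 * pi) *\<^sub>R axis i 1) = f p"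
    using trig_poly_periodic_int[OF assms, of p 1] by simp
  ultimately show ?thesis by (simp add: integral_unique)
qed

lemma tint_pd_eq_0:
  assumes "f \<in> trig_poly"
  shows "tint (pd i f) = 0"
proof -
  have cont: "continuous_on UNIV (pd i f)"
    by (rule continuous_on_trig_poly[OF pd_trig_poly[OF assms]])
  consider "i = 1" | "i = 2" using exhaust_2 by blast
  then show ?thesis
  proof cases
    case 1
    have "continuous_on S (\<lambda>q. pd i f (vec2_of_pair q))" for S
      by (rule continuous_on_compose2[OF cont, of S vec2_of_pair])
        (auto simp: vec2_of_pair_def intro!: continuous_intros)
    then have swap_cont: "continuous_on S (\<lambda>(x, y). pd i f (vec2_of_pair (x, y)))" for S
      by (simp add: case_prod_beta')
    have "tint (pd i f) = integral (cbox 0 (2*pi)) (\<lambda>x. integral (cbox 0 (2*pi)) (\<lambda>y. pd i f (vec2_of_pair (x, y))))"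
      using tint_iterated[OF cont] by simp
    also have "\<dots> = integral (cbox 0 (2*pi)) (\<lambda>y. integral (cbox 0 (2*pi)) (\<lambda>x. pd i f (vec2_of_pair (x, y))))"
      by (rule integral_swap_continuous) (use swap_cont in auto)
    also have "\<dots> = integral {0..2*pi} (\<lambda>y. integral {0..2*pi} (\<lambda>x. pd i f (y *\<^sub>R axis 2 1 + x *\<^sub>R axis i 1)))"
      using 1 by (simp add: vec2_of_pair_def add.commute)
    finally show ?thesis by (simp add: integral_pd_over_period_eq_0[OF assms])
  next
    case 2
    have "tint (pd i f) = integral {0..2*pi} (\<lambda>x. integral {0..2*pi} (\<lambda>y. pd i f (x *\<^sub>R axis 1 1 + y *\<^sub>R axis i 1)))"
      using tint_iterated[OF cont] 2 by (simp add: vec2_of_pair_def)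
    then show ?thesis by (simp add: integral_pd_over_period_eq_0[OF assms])
  qed
qed

lemma trig_poly_integrable: "f \<in> trig_poly \<Longrightarrow> f integrable_on torus_box"
  unfolding torus_box_def
  by (intro integrable_continuous continuous_on_subset[OF continuous_on_trig_poly]) auto

lemma tint_add: "f \<in> trig_poly \<Longrightarrow> g \<in> trig_poly \<Longrightarrow> tint (\<lambda>x. f x + g x) = tint f + tint g"
  unfolding tint_def by (intro integral_add trig_poly_integrable)

lemma tint_diff: "f \<in> trig_poly \<Longrightarrow> g \<in> trig_poly \<Longrightarrow> tint (\<lambda>x. f x - g x) = tint f - tint g"
  unfolding tint_def by (intro integral_diff trig_poly_integrable)

lemma tint_cmult: "tint (\<lambda>x. c * f x) = c * tint f"
  unfolding tint_def by simp

lemma tint_sum: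
  "finite I \<Longrightarrow> (\<And>i. i \<in> I \<Longrightarrow> F i \<in> trig_poly) \<Longrightarrow> tint (\<lambda>x. \<Sum>i\<in>I. F i x) = (\<Sum>i\<in>I. tint (F i))"
  unfolding tint_def by (intro integral_sum trig_poly_integrable)

lemma tint_mono:
  "f \<in> trig_poly \<Longrightarrow> g \<in> trig_poly \<Longrightarrow> (\<And>x. f x \<le> g x) \<Longrightarrow> tint f \<le> tint g"
  unfolding tint_def by (intro integral_le trig_poly_integrable)

lemma tint_linear4:
  assumes "F1 \<in> trig_poly" "F2 \<in> trig_poly" "F3 \<in> trig_poly" "F4 \<in> trig_poly"
  shows "tint (\<lambda>x. a * F1 x + b * F2 x + c * F3 x + e * F4 x)
    = a * tint F1 + b * tint F2 + c * tint F3 + e * tint F4"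
proof -
  have "tint (\<lambda>x. a * F1 x + b * F2 x + c * F3 x + e * F4 x)
      = tint (\<lambda>x. a * F1 x + b * F2 x + c * F3 x) + tint (\<lambda>x. e * F4 x)"
    using assms by (intro tint_add trig_poly.add trig_poly_cmult)
  also have "tint (\<lambda>x. a * F1 x + b * F2 x + c * F3 x)
      = tint (\<lambda>x. a * F1 x + b * F2 x) + tint (\<lambda>x. c * F3 x)"
    using assms by (intro tint_add trig_poly.add trig_poly_cmult)
  also have "tint (\<lambda>x. a * F1 x + b * F2 x) = tint (\<lambda>x. a * F1 x) + tint (\<lambda>x. b * F2 x)"
    using assms by (intro tint_add trig_poly_cmult)
  finally show ?thesis by (simp only: tint_cmult)
qed

lemma tint_linear3:
  assumes "F1 \<in> trig_poly" "F2 \<in> trig_poly" "F3 \<in> trig_poly"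
  shows "tint (\<lambda>x. a * F1 x + b * F2 x + c * F3 x) = a * tint F1 + b * tint F2 + c * tint F3"
  using tint_linear4[OF assms trig_poly.const[of 0], of a b c 0] by simp

lemma grad_L2sq_eq_tint_inner: "grad_L2sq f = tint (\<lambda>x. grad f x \<bullet> grad f x)"
  unfolding grad_L2sq_def by (simp add: power2_norm_eq_inner)

lemma tint_pd_mult:
  assumes "u \<in> trig_poly" "v \<in> trig_poly"
  shows "tint (\<lambda>x. pd i u x * v x) = - tint (\<lambda>x. u x * pd i v x)"
proof -
  have "0 = tint (pd i (\<lambda>x. u x * v x))"
    using tint_pd_eq_0[OF trig_poly.mult[OF assms]] by simp
  also have "\<dots> = tint (\<lambda>x. pd i u x * v x + u x * pd i v x)"
    by (simp only: pd_mult[OF assms])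
  also have "\<dots> = tint (\<lambda>x. pd i u x * v x) + tint (\<lambda>x. u x * pd i v x)"
    using assms by (intro tint_add trig_poly.mult pd_trig_poly)
  finally show ?thesis by simp
qed

lemma tint_dvg_mult:
  assumes "F \<in> trig_field" "v \<in> trig_poly"
  shows "tint (\<lambda>x. dvg F x * v x) = - tint (\<lambda>x. F x \<bullet> grad v x)"
proof -
  have F: "(\<lambda>x. F x $ i) \<in> trig_poly" for i
    using assms(1) by (simp add: trig_field_def)
  have "tint (\<lambda>x. dvg F x * v x) = (\<Sum>i\<in>UNIV. tint (\<lambda>x. pd i (\<lambda>y. F y $ i) x * v x))"
    unfolding dvg_def sum_distrib_right
    using F assms(2) by (intro tint_sum trig_poly.mult pd_trig_poly) auto
  also have "\<dots> = (\<Sum>i\<in>UNIV. - tint (\<lambda>x. F x $ i * pd i v x))"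
    using F assms(2) by (simp add: tint_pd_mult)
  also have "\<dots> = - tint (\<lambda>x. F x \<bullet> grad v x)"
    unfolding inner_vec_def inner_real_def grad_def sum_negf
    using F assms(2) by (simp add: tint_sum trig_poly.mult pd_trig_poly)
  finally show ?thesis .
qed

lemma tint_lap_mult:
  "u \<in> trig_poly \<Longrightarrow> v \<in> trig_poly \<Longrightarrow> tint (\<lambda>x. lap u x * v x) = - tint (\<lambda>x. grad u x \<bullet> grad v x)"
  unfolding lap_def by (intro tint_dvg_mult grad_trig_field)

lemma tint_lap_mult_commute:
  "u \<in> trig_poly \<Longrightarrow> v \<in> trig_poly \<Longrightarrow> tint (\<lambda>x. lap u x * v x) = tint (\<lambda>x. u x * lap v x)"
  using tint_lap_mult[of u v] tint_lap_mult[of v u] by (simp add: mult.commute inner_commute)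

lemma trig_poly_eq_0_if_tint_square_eq_0:
  assumes "u \<in> trig_poly" "tint (\<lambda>x. u x * u x) = 0"
  shows "u x = 0"
proof -
  have uu: "(\<lambda>x. u x * u x) \<in> trig_poly" by (rule trig_poly.mult[OF assms(1) assms(1)])
  have "((\<lambda>x. u x * u x) has_integral 0) (cbox 0 (\<chi> i. 2 * pi))"
    using trig_poly_integrable[OF uu] assms(2) unfolding tint_def torus_box_def
    by (metis has_integral_integrable_integral)
  moreover have "(\<chi> i. pi) \<in> box 0 (\<chi> i. 2 * pi :: real^2)"
    by (simp add: mem_box_cart)
  moreover obtain y where "y \<in> torus_box" "u y = u x"
    using trig_poly_value_in_torus_box[OF assms(1)] by blast
  ultimately have "u y * u y = 0"
    using continuous_on_subset[OF continuous_on_trig_poly[OF uu]] assms(1) unfolding torus_box_def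
    by (intro has_integral_0_cbox_imp_0[where f="\<lambda>x. u x * u x"]) auto
  then show ?thesis using \<open>u y = u x\<close> by simp
qed

section \<open>Orthogonal projections\<close>

definition orth_proj :: "(real^2 \<Rightarrow> real) set \<Rightarrow> (real^2 \<Rightarrow> real) \<Rightarrow> (real^2 \<Rightarrow> real) \<Rightarrow> bool" where
  "orth_proj S f p \<longleftrightarrow> p \<in> S \<and> (\<forall>q\<in>S. tint (\<lambda>x. (f x - p x) * q x) = 0)"

definition proj_subspace :: "(real^2 \<Rightarrow> real) set \<Rightarrow> bool" where
  "proj_subspace S \<longleftrightarrow> S \<subseteq> trig_poly \<and> S \<noteq> {}
     \<and> (\<forall>s\<in>S. \<forall>t\<in>S. (\<lambda>x. s x + t x) \<in> S) \<and> (\<forall>s\<in>S. \<forall>c. (\<lambda>x. c * s x) \<in> S)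
     \<and> (\<forall>f\<in>trig_poly. \<exists>p. orth_proj S f p)"

definition span_insert :: "(real^2 \<Rightarrow> real) set \<Rightarrow> (real^2 \<Rightarrow> real) \<Rightarrow> (real^2 \<Rightarrow> real) set" where
  "span_insert S \<phi> = {(\<lambda>x. s x + c * \<phi> x) | s c. s \<in> S}"

lemma span_insertI: "s \<in> S \<Longrightarrow> (\<lambda>x. s x + c * \<phi> x) \<in> span_insert S \<phi>"
  unfolding span_insert_def by blast

lemma proj_subspaceD:
  assumes "proj_subspace S"
  shows "S \<subseteq> trig_poly" "s \<in> S \<Longrightarrow> t \<in> S \<Longrightarrow> (\<lambda>x. s x + t x) \<in> S"
    "s \<in> S \<Longrightarrow> (\<lambda>x. c * s x) \<in> S" "f \<in> trig_poly \<Longrightarrow> \<exists>p. orth_proj S f p"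
  using assms unfolding proj_subspace_def by blast+

lemma proj_subspace_diff:
  assumes "proj_subspace S" "s \<in> S" "t \<in> S"
  shows "(\<lambda>x. s x - t x) \<in> S"
proof -
  have "(\<lambda>x. (-1) * t x) \<in> S" using proj_subspaceD(3)[OF assms(1,3)] .
  from proj_subspaceD(2)[OF assms(1,2) this] show ?thesis by simp
qed

text \<open>Gram--Schmidt step: with \<open>pf\<close>, \<open>p\<phi>\<close> the projections of \<open>f\<close>, \<open>\<phi>\<close> onto \<open>S\<close> and
  \<open>\<psi> = \<phi> - p\<phi>\<close>, the projection onto \<open>span_insert S \<phi>\<close> is \<open>pf + \<alpha> \<psi>\<close> with
  \<open>\<alpha> = \<langle>f - pf, \<psi>\<rangle> / \<langle>\<psi>, \<psi>\<rangle>\<close>; if \<open>\<psi> = 0\<close> the junk value \<open>\<alpha> = 0\<close> is still correct.\<close>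

lemma orth_proj_span_insert:
  assumes S: "proj_subspace S" and \<phi>: "\<phi> \<in> trig_poly" and f: "f \<in> trig_poly"
  shows "\<exists>p. orth_proj (span_insert S \<phi>) f p"
proof -
  obtain p\<phi> where p\<phi>: "orth_proj S \<phi> p\<phi>" using proj_subspaceD(4)[OF S \<phi>] by blast
  obtain pf where pf: "orth_proj S f pf" using proj_subspaceD(4)[OF S f] by blast
  have p\<phi>S: "p\<phi> \<in> S" and pfS: "pf \<in> S" using p\<phi> pf unfolding orth_proj_def by blast+
  have ST: "S \<subseteq> trig_poly" using S by (rule proj_subspaceD)
  define \<psi> where "\<psi> = (\<lambda>x. \<phi> x - p\<phi> x)"
  define g where "g = (\<lambda>x. f x - pf x)"
  have \<psi>T: "\<psi> \<in> trig_poly" and gT: "g \<in> trig_poly"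
    unfolding \<psi>_def g_def using \<phi> f p\<phi>S pfS ST by (auto intro: trig_poly_diff)
  have g_orth: "tint (\<lambda>x. g x * s x) = 0" and \<psi>_orth: "tint (\<lambda>x. \<psi> x * s x) = 0" if "s \<in> S" for s
    using pf p\<phi> that unfolding orth_proj_def g_def \<psi>_def by blast+
  define X where "X = tint (\<lambda>x. g x * \<psi> x)"
  define Y where "Y = tint (\<lambda>x. \<psi> x * \<psi> x)"
  define \<alpha> where "\<alpha> = X / Y"
  have "X = \<alpha> * Y"
  proof (cases "Y = 0")
    case True
    then have "\<psi> x = 0" for x
      using trig_poly_eq_0_if_tint_square_eq_0[OF \<psi>T] unfolding Y_def by blast
    then show ?thesis using True by (simp add: X_def tint_def)
  qed (simp add: \<alpha>_def)
  define p where "p = (\<lambda>x. (pf x - \<alpha> * p\<phi> x) + \<alpha> * \<phi> x)"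
  have "orth_proj (span_insert S \<phi>) f p"
    unfolding orth_proj_def
  proof (intro conjI ballI)
    show "p \<in> span_insert S \<phi>"
      unfolding p_def using pfS p\<phi>S
      by (intro span_insertI proj_subspace_diff[OF S] proj_subspaceD(3)[OF S])
    fix q assume "q \<in> span_insert S \<phi>"
    then obtain s c where "s \<in> S" and q: "q = (\<lambda>x. s x + c * \<phi> x)"
      unfolding span_insert_def by blast
    define s' where "s' = (\<lambda>x. s x + c * p\<phi> x)"
    have s'S: "s' \<in> S"
      unfolding s'_def using \<open>s \<in> S\<close> p\<phi>S by (intro proj_subspaceD(2,3)[OF S])
    have "(f x - p x) * q x = 1 * (g x * s' x) + c * (g x * \<psi> x) + (- \<alpha>) * (\<psi> x * s' x)
        + (- \<alpha> * c) * (\<psi> x * \<psi> x)" for x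
      unfolding p_def q s'_def \<psi>_def g_def by (simp add: algebra_simps)
    then have "tint (\<lambda>x. (f x - p x) * q x)
        = 1 * tint (\<lambda>x. g x * s' x) + c * X + (- \<alpha>) * tint (\<lambda>x. \<psi> x * s' x) + (- \<alpha> * c) * Y"
      unfolding X_def Y_def using gT \<psi>T s'S ST
      by (simp only:) (intro tint_linear4 trig_poly.mult; blast)
    also have "\<dots> = 0"
      using g_orth[OF s'S] \<psi>_orth[OF s'S] \<open>X = \<alpha> * Y\<close> by simp
    finally show "tint (\<lambda>x. (f x - p x) * q x) = 0" .
  qed
  then show ?thesis by blast
qed

lemma proj_subspace_span_insert:
  assumes S: "proj_subspace S" and \<phi>: "\<phi> \<in> trig_poly"
  shows "proj_subspace (span_insert S \<phi>)"
  unfolding proj_subspace_def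
proof (intro conjI ballI allI)
  show "span_insert S \<phi> \<subseteq> trig_poly"
    using proj_subspaceD(1)[OF S] \<phi> unfolding span_insert_def
    by (auto intro!: trig_poly.add trig_poly_cmult)
  show "span_insert S \<phi> \<noteq> {}"
    using S unfolding proj_subspace_def span_insert_def by blast
  show "(\<lambda>x. s x + t x) \<in> span_insert S \<phi>" if s: "s \<in> span_insert S \<phi>" and t: "t \<in> span_insert S \<phi>" for s t
  proof -
    obtain s0 c where "s0 \<in> S" "s = (\<lambda>x. s0 x + c * \<phi> x)"
      using s unfolding span_insert_def by blast
    moreover obtain t0 d where "t0 \<in> S" "t = (\<lambda>x. t0 x + d * \<phi> x)"
      using t unfolding span_insert_def by blast
    moreover have "(\<lambda>x. s0 x + t0 x) \<in> S" using calculation by (intro proj_subspaceD(2)[OF S])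
    ultimately have "(\<lambda>x. s x + t x) = (\<lambda>x. (s0 x + t0 x) + (c + d) * \<phi> x)"
      and "(\<lambda>x. s0 x + t0 x) \<in> S"
      by (auto simp: algebra_simps)
    then show ?thesis by (simp add: span_insertI)
  qed
  show "(\<lambda>x. e * s x) \<in> span_insert S \<phi>" if s: "s \<in> span_insert S \<phi>" for s e
  proof -
    obtain s0 c where "s0 \<in> S" "s = (\<lambda>x. s0 x + c * \<phi> x)"
      using s unfolding span_insert_def by blast
    moreover have "(\<lambda>x. e * s0 x) \<in> S" using calculation by (intro proj_subspaceD(3)[OF S])
    ultimately have "(\<lambda>x. e * s x) = (\<lambda>x. e * s0 x + (e * c) * \<phi> x)"
      and "(\<lambda>x. e * s0 x) \<in> S"
      by (auto simp: algebra_simps)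
    then show ?thesis by (simp add: span_insertI)
  qed
  show "\<exists>p. orth_proj (span_insert S \<phi>) f p" if "f \<in> trig_poly" for f
    using orth_proj_span_insert[OF S \<phi> that] .
qed

lemma proj_subspace_zero: "proj_subspace {\<lambda>x. 0}"
  unfolding proj_subspace_def orth_proj_def by (auto intro!: trig_poly.const simp: tint_def)

definition trig_span :: "(real^2) set \<Rightarrow> (real^2 \<Rightarrow> real) set" where
  "trig_span L = {f. \<exists>a b :: real^2 \<Rightarrow> real. f = (\<lambda>x. \<Sum>k\<in>L. a k * cos (k \<bullet> x) + b k * sin (k \<bullet> x))}"

lemma trig_span_insert:
  assumes "finite L" "k \<notin> L"
  shows "trig_span (insert k L) = span_insert (span_insert (trig_span L) (\<lambda>x. cos (k \<bullet> x))) (\<lambda>x. sin (k \<bullet> x))"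
proof (intro set_eqI iffI)
  fix f assume "f \<in> trig_span (insert k L)"
  then obtain a b where f: "f = (\<lambda>x. \<Sum>k\<in>insert k L. a k * cos (k \<bullet> x) + b k * sin (k \<bullet> x))"
    unfolding trig_span_def by blast
  define s where "s = (\<lambda>x. \<Sum>k\<in>L. a k * cos (k \<bullet> x) + b k * sin (k \<bullet> x))"
  have "s \<in> trig_span L" unfolding trig_span_def s_def by blast
  then have "(\<lambda>x. s x + a k * cos (k \<bullet> x)) \<in> span_insert (trig_span L) (\<lambda>x. cos (k \<bullet> x))"
    by (rule span_insertI)
  moreover have "f = (\<lambda>x. (s x + a k * cos (k \<bullet> x)) + b k * sin (k \<bullet> x))"
    unfolding f s_def using assms by (simp add: algebra_simps)
  ultimately show "f \<in> span_insert (span_insert (trig_span L) (\<lambda>x. cos (k \<bullet> x))) (\<lambda>x. sin (k \<bullet> x))"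
    by (simp add: span_insertI)
next
  fix f assume "f \<in> span_insert (span_insert (trig_span L) (\<lambda>x. cos (k \<bullet> x))) (\<lambda>x. sin (k \<bullet> x))"
  then obtain s c1 c2 where s: "s \<in> trig_span L"
    and f: "f = (\<lambda>x. (s x + c1 * cos (k \<bullet> x)) + c2 * sin (k \<bullet> x))"
    unfolding span_insert_def by blast
  obtain a b where s_eq: "s = (\<lambda>x. \<Sum>k\<in>L. a k * cos (k \<bullet> x) + b k * sin (k \<bullet> x))"
    using s unfolding trig_span_def by blast
  have "(\<Sum>j\<in>L. (a(k := c1)) j * cos (j \<bullet> x) + (b(k := c2)) j * sin (j \<bullet> x))
      = (\<Sum>j\<in>L. a j * cos (j \<bullet> x) + b j * sin (j \<bullet> x))" for x
    using assms(2) by (intro sum.cong) auto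
  then have "f = (\<lambda>x. \<Sum>j\<in>insert k L. (a(k := c1)) j * cos (j \<bullet> x) + (b(k := c2)) j * sin (j \<bullet> x))"
    unfolding f s_eq using assms by (simp add: algebra_simps)
  then show "f \<in> trig_span (insert k L)" unfolding trig_span_def by blast
qed

lemma proj_subspace_trig_span:
  assumes "\<forall>k\<in>L. \<forall>i. k $ i \<in> \<int>"
  shows "proj_subspace (trig_span L)"
proof (cases "finite L")
  case True
  then show ?thesis using assms
  proof (induction L rule: finite_induct)
    case empty
    have "trig_span {} = {\<lambda>x. 0}" unfolding trig_span_def by auto
    then show ?case using proj_subspace_zero by simp
  next
    case (insert k L)
    then show ?case unfolding trig_span_insert[OF insert(1,2)]
      by (intro proj_subspace_span_insert trig_poly.cos trig_poly.sin) auto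
  qed
next
  case False
  then have "trig_span L = {\<lambda>x. 0}" unfolding trig_span_def by auto
  then show ?thesis using proj_subspace_zero by simp
qed

lemma proj_subspace_XN: "proj_subspace (XN N)"
proof -
  have "XN N = trig_span (lattice_pts N)" unfolding XN_def trig_span_def ..
  then show ?thesis by (auto intro: proj_subspace_trig_span simp: lattice_pts_def)
qed

lemma orth_proj_unique:
  assumes S: "proj_subspace S" and f: "f \<in> trig_poly" and "orth_proj S f p" "orth_proj S f p'"
  shows "p = p'"
proof -
  have pS: "p \<in> S" "p' \<in> S" using assms unfolding orth_proj_def by blast+
  define d where "d = (\<lambda>x. p x - p' x)"
  have dS: "d \<in> S" unfolding d_def using pS by (rule proj_subspace_diff[OF S])
  have T: "p \<in> trig_poly" "p' \<in> trig_poly" "d \<in> trig_poly"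
    using pS dS proj_subspaceD(1)[OF S] by blast+
  have orth: "tint (\<lambda>x. (f x - p' x) * d x) = 0" "tint (\<lambda>x. (f x - p x) * d x) = 0"
    using assms dS unfolding orth_proj_def by blast+
  have "tint (\<lambda>x. d x * d x) = tint (\<lambda>x. (f x - p' x) * d x - (f x - p x) * d x)"
    by (simp add: d_def algebra_simps)
  also have "\<dots> = tint (\<lambda>x. (f x - p' x) * d x) - tint (\<lambda>x. (f x - p x) * d x)"
    using f T by (intro tint_diff trig_poly.mult trig_poly_diff)
  finally have "tint (\<lambda>x. d x * d x) = 0"
    using orth by simp
  then have "d x = 0" for x
    by (rule trig_poly_eq_0_if_tint_square_eq_0[OF T(3)])
  then show ?thesis unfolding d_def by (simp add: fun_eq_iff)
qed

lemma orth_proj_PiN: "f \<in> trig_poly \<Longrightarrow> orth_proj (XN N) f (PiN N f)"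
  unfolding PiN_def orth_proj_def[symmetric]
  using proj_subspaceD(4)[OF proj_subspace_XN] orth_proj_unique[OF proj_subspace_XN]
  by (metis theI)

lemma tint_PiN_mult:
  assumes "f \<in> trig_poly" "q \<in> XN N"
  shows "tint (\<lambda>x. PiN N f x * q x) = tint (\<lambda>x. f x * q x)"
proof -
  have PiN: "PiN N f \<in> trig_poly" "q \<in> trig_poly"
    using orth_proj_PiN[OF assms(1)] assms(2) proj_subspaceD(1)[OF proj_subspace_XN]
    unfolding orth_proj_def by blast+
  have "0 = tint (\<lambda>x. (f x - PiN N f x) * q x)"
    using orth_proj_PiN[OF assms(1)] assms(2) unfolding orth_proj_def by simp
  also have "\<dots> = tint (\<lambda>x. f x * q x) - tint (\<lambda>x. PiN N f x * q x)"
    unfolding left_diff_distrib using assms(1) PiN by (intro tint_diff trig_poly.mult)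
  finally show ?thesis by simp
qed

section \<open>The energy estimate\<close>

lemma quartic_potential_increment_le:
  fixes z w :: "'a::real_inner"
  assumes z: "norm z ^ 2 \<le> M" and w: "norm w ^ 2 \<le> M"
  shows "(norm w ^ 2 - 1)\<^sup>2 / 4 - (norm z ^ 2 - 1)\<^sup>2 / 4
    \<le> (norm z ^ 2 - 1) * (z \<bullet> (w - z)) + (3/2 * M - 1/2) * norm (w - z) ^ 2"
proof -
  define d where "d = w - z"
  define Z where "Z = norm z ^ 2"
  define D where "D = norm d ^ 2"
  define s where "s = norm w ^ 2 - Z"
  have s_inner: "s = d \<bullet> (w + z)"
    unfolding s_def Z_def d_def by (simp add: power2_norm_eq_inner algebra_simps inner_commute)
  have s_split: "s = 2 * (z \<bullet> d) + D"
    unfolding s_def Z_def D_def d_def by (simp add: power2_norm_eq_inner algebra_simps inner_commute)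
  have "norm (w + z) ^ 2 + norm (w - z) ^ 2 = 2 * norm w ^ 2 + 2 * Z"
    unfolding Z_def by (simp add: power2_norm_eq_inner algebra_simps inner_commute)
  then have sum_bound: "norm (w + z) ^ 2 \<le> 6 * M - 2 * Z"
    using z w unfolding Z_def by (smt (verit) zero_le_power2)
  have "s\<^sup>2 \<le> D * norm (w + z) ^ 2"
    using Cauchy_Schwarz_ineq[of d "w + z"] unfolding s_inner D_def
    by (simp add: power2_norm_eq_inner)
  also have "\<dots> \<le> D * (6 * M - 2 * Z)"
    using sum_bound unfolding D_def by (simp add: mult_left_mono)
  finally have s_bound: "s\<^sup>2 \<le> D * (6 * M - 2 * Z)" .
  have "(norm w ^ 2 - 1)\<^sup>2 / 4 - (norm z ^ 2 - 1)\<^sup>2 / 4 = (Z - 1) * s / 2 + s\<^sup>2 / 4"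
    unfolding s_def Z_def by (simp add: power2_eq_square field_simps)
  moreover have "(Z - 1) * s / 2 = (Z - 1) * (z \<bullet> d) + (Z - 1) * D / 2"
    unfolding s_split by (simp add: field_simps)
  moreover have "(Z - 1) * D / 2 + D * (6 * M - 2 * Z) / 4 = (3/2 * M - 1/2) * D"
    by (simp add: field_simps)
  ultimately show ?thesis
    using s_bound unfolding Z_def D_def d_def by linarith
qed

lemma sqrt_cross_term_nonneg:
  fixes a b x y :: real
  assumes "0 \<le> a" "0 \<le> b"
  shows "0 \<le> a * x\<^sup>2 + b * y\<^sup>2 + 2 * sqrt (a * b) * (x * y)"
proof -
  have "a * x\<^sup>2 + b * y\<^sup>2 + 2 * sqrt (a * b) * (x * y) = (sqrt a * x + sqrt b * y)\<^sup>2"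
    using assms by (simp add: power2_eq_square algebra_simps real_sqrt_mult)
  then show ?thesis by simp
qed

lemma norm_grad_le_grad_Linf:
  assumes "f \<in> trig_poly"
  shows "norm (grad f x) \<le> grad_Linf f"
proof -
  obtain B1 B2 where B: "\<forall>x. \<bar>pd 1 f x\<bar> \<le> B1" "\<forall>x. \<bar>pd 2 f x\<bar> \<le> B2"
    using trig_poly_bounded[OF pd_trig_poly[OF assms]] by metis
  have "norm (grad f y) \<le> B1 + B2" for y
  proof -
    have "norm (grad f y) \<le> (\<Sum>i\<in>UNIV. \<bar>grad f y $ i\<bar>)" by (rule norm_le_l1_cart)
    also have "\<dots> = \<bar>pd 1 f y\<bar> + \<bar>pd 2 f y\<bar>" by (simp add: sum_2 grad_def)
    finally show ?thesis using B by (smt (verit))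
  qed
  then have "bdd_above (range (\<lambda>x. norm (grad f x)))" by (auto intro!: bdd_aboveI)
  then show ?thesis unfolding grad_Linf_def by (rule cSUP_upper[rotated]) simp
qed

lemma Gpot_grad_trig_poly: "f \<in> trig_poly \<Longrightarrow> (\<lambda>x. Gpot (grad f x)) \<in> trig_poly"
proof -
  assume f: "f \<in> trig_poly"
  have "(\<lambda>x. Gpot (grad f x)) = (\<lambda>x. (1/4) * (grad f x \<bullet> grad f x - 1) ^ 2)"
    by (simp add: Gpot_def power2_norm_eq_inner)
  also have "\<dots> \<in> trig_poly"
    using f by (intro trig_poly_cmult trig_poly_power trig_poly_diff inner_trig_poly grad_trig_field
        trig_poly.const)
  finally show ?thesis .
qed

lemma energy_eq_tint:
  assumes "f \<in> trig_poly"
  shows "energy \<nu> f = tint (\<lambda>x. \<nu> / 2 * (lap f x)\<^sup>2 + Gpot (grad f x))"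
  unfolding energy_def tint_cmult[symmetric] using assms
  by (intro tint_add[symmetric] trig_poly_cmult trig_poly_power lap_trig_poly Gpot_grad_trig_poly)

lemma energy_increment_le:
  assumes hn: "hn \<in> trig_poly" and hs: "hs \<in> trig_poly"
    and "\<And>x. norm (grad hn x) ^ 2 \<le> M" "\<And>x. norm (grad hs x) ^ 2 \<le> M"
  defines "d \<equiv> \<lambda>x. hs x - hn x"
  shows "energy \<nu> hs - energy \<nu> hn
    \<le> tint (\<lambda>x. gnl (grad hn x) \<bullet> grad d x) + \<nu> * tint (\<lambda>x. lap hs x * lap d x)
      - \<nu> / 2 * tint (\<lambda>x. lap d x * lap d x) + (3/2 * M - 1/2) * grad_L2sq d"
proof -
  have d: "d \<in> trig_poly" unfolding d_def using hs hn by (rule trig_poly_diff)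
  define e where "e f x = \<nu> / 2 * (lap f x)\<^sup>2 + Gpot (grad f x)" for f x
  have e: "e f \<in> trig_poly" if "f \<in> trig_poly" for f
    unfolding e_def using that
    by (intro trig_poly.add trig_poly_cmult trig_poly_power lap_trig_poly Gpot_grad_trig_poly)
  define \<Psi> where "\<Psi> x = 1 * (gnl (grad hn x) \<bullet> grad d x) + \<nu> * (lap hs x * lap d x)
    + (- \<nu> / 2) * (lap d x * lap d x) + (3/2 * M - 1/2) * (grad d x \<bullet> grad d x)" for x
  have pointwise: "e hs x - e hn x \<le> \<Psi> x" for x
  proof -
    have "Gpot (grad hs x) - Gpot (grad hn x) \<le> gnl (grad hn x) \<bullet> grad d x + (3/2 * M - 1/2) * (grad d x \<bullet> grad d x)"
      using quartic_potential_increment_le[OF assms(3,4)] grad_diff[OF hs hn]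
      by (simp add: Gpot_def gnl_def d_def power2_norm_eq_inner)
    moreover have "\<nu> / 2 * (lap hs x)\<^sup>2 - \<nu> / 2 * (lap hn x)\<^sup>2
        = \<nu> * (lap hs x * lap d x) + (- \<nu> / 2) * (lap d x * lap d x)"
      unfolding d_def lap_diff[OF hs hn] by (simp add: algebra_simps power2_eq_square)
    ultimately show ?thesis unfolding e_def \<Psi>_def by linarith
  qed
  have "energy \<nu> hs - energy \<nu> hn = tint (\<lambda>x. e hs x - e hn x)"
    unfolding energy_eq_tint[OF hs] energy_eq_tint[OF hn] e_def[symmetric]
    using e hs hn by (intro tint_diff[symmetric])
  also have "\<dots> \<le> tint \<Psi>"
    unfolding \<Psi>_def using e hs hn d pointwise[unfolded \<Psi>_def]
    by (intro tint_mono trig_poly_diff trig_poly.add trig_poly_cmult trig_poly.mult inner_trig_poly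
        grad_trig_field gnl_grad_trig_field lap_trig_poly)
  also have "tint \<Psi> = tint (\<lambda>x. gnl (grad hn x) \<bullet> grad d x) + \<nu> * tint (\<lambda>x. lap hs x * lap d x)
      - \<nu> / 2 * tint (\<lambda>x. lap d x * lap d x) + (3/2 * M - 1/2) * grad_L2sq d"
    unfolding \<Psi>_def grad_L2sq_eq_tint_inner using hn hs d
    by (subst tint_linear4) (auto intro!: trig_poly.mult inner_trig_poly grad_trig_field
        gnl_grad_trig_field lap_trig_poly)
  finally show ?thesis .
qed

lemma scheme_tested_with_increment:
  assumes hn: "hn \<in> XN N" and hs: "hs \<in> XN N"
    and scheme: "\<And>x. (hs x - hn x) / \<tau> = - \<nu> * lap (lap hs) x + A * lap (\<lambda>y. hs y - hn y) x
      + PiN N (dvg (\<lambda>y. gnl (grad hn y))) x"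
  defines "d \<equiv> \<lambda>x. hs x - hn x"
  shows "tint (\<lambda>x. d x * d x) / \<tau> = - \<nu> * tint (\<lambda>x. lap hs x * lap d x) - A * grad_L2sq d
    - tint (\<lambda>x. gnl (grad hn x) \<bullet> grad d x)"
proof -
  have XT: "XN N \<subseteq> trig_poly" by (rule proj_subspaceD(1)[OF proj_subspace_XN])
  have dX: "d \<in> XN N" unfolding d_def using hs hn by (rule proj_subspace_diff[OF proj_subspace_XN])
  then have T: "hn \<in> trig_poly" "hs \<in> trig_poly" "d \<in> trig_poly" using hn hs XT by auto
  define F where "F = dvg (\<lambda>y. gnl (grad hn y))"
  have F: "(\<lambda>y. gnl (grad hn y)) \<in> trig_field" "F \<in> trig_poly"
    unfolding F_def using T by (auto intro: gnl_grad_trig_field dvg_trig_poly)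
  have PiN: "PiN N F \<in> trig_poly"
    using orth_proj_PiN[OF F(2)] XT unfolding orth_proj_def by blast
  have pointwise: "(1 / \<tau>) * (d x * d x)
      = (- \<nu>) * (lap (lap hs) x * d x) + A * (lap d x * d x) + 1 * (PiN N F x * d x)" for x
  proof -
    have "(1 / \<tau>) * (d x * d x) = (d x / \<tau>) * d x" by simp
    also have "\<dots> = (- \<nu> * lap (lap hs) x + A * lap d x + PiN N F x) * d x"
      using scheme unfolding d_def F_def by simp
    finally show ?thesis by (simp add: algebra_simps)
  qed
  have "tint (\<lambda>x. d x * d x) / \<tau>
      = tint (\<lambda>x. (- \<nu>) * (lap (lap hs) x * d x) + A * (lap d x * d x) + 1 * (PiN N F x * d x))"
    unfolding pointwise[symmetric] tint_cmult by simp
  also have "\<dots> = - \<nu> * tint (\<lambda>x. lap (lap hs) x * d x) + A * tint (\<lambda>x. lap d x * d x)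
      + tint (\<lambda>x. PiN N F x * d x)"
    using T PiN by (subst tint_linear3) (auto intro: trig_poly.mult lap_trig_poly)
  also have "tint (\<lambda>x. lap (lap hs) x * d x) = tint (\<lambda>x. lap hs x * lap d x)"
    using T by (intro tint_lap_mult_commute lap_trig_poly)
  also have "tint (\<lambda>x. lap d x * d x) = - grad_L2sq d"
    unfolding grad_L2sq_eq_tint_inner using T by (intro tint_lap_mult)
  also have "tint (\<lambda>x. PiN N F x * d x) = - tint (\<lambda>x. gnl (grad hn x) \<bullet> grad d x)"
    using tint_PiN_mult[OF F(2) dX] tint_dvg_mult[OF F(1) T(3)] unfolding F_def by simp
  finally show ?thesis by simp
qed

lemma tint_increment_cross_term:
  assumes "0 < \<tau>" "0 \<le> \<nu>" and d: "d \<in> trig_poly"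
  shows "sqrt (2 * \<nu> / \<tau>) * grad_L2sq d
    \<le> tint (\<lambda>x. d x * d x) / \<tau> + \<nu> / 2 * tint (\<lambda>x. lap d x * lap d x)"
proof -
  define s where "s = sqrt (2 * \<nu> / \<tau>)"
  have "s = sqrt (2\<^sup>2 * (1 / \<tau> * (\<nu> / 2)))"
    unfolding s_def by (rule arg_cong[where f=sqrt]) simp
  then have s: "2 * sqrt (1 / \<tau> * (\<nu> / 2)) = s"
    by (simp only: real_sqrt_mult real_sqrt_abs abs_numeral)
  have "tint (\<lambda>x. 0) \<le> tint (\<lambda>x. (1 / \<tau>) * (d x * d x) + \<nu> / 2 * (lap d x * lap d x) + s * (lap d x * d x))"
  proof (rule tint_mono)
    fix x
    show "0 \<le> (1 / \<tau>) * (d x * d x) + \<nu> / 2 * (lap d x * lap d x) + s * (lap d x * d x)"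
      using sqrt_cross_term_nonneg[of "1 / \<tau>" "\<nu> / 2" "d x" "lap d x"] assms(1,2)
      unfolding s by (simp add: power2_eq_square mult.commute)
  qed (intro trig_poly.add trig_poly_cmult trig_poly.mult lap_trig_poly trig_poly.const d)+
  also have "\<dots> = tint (\<lambda>x. d x * d x) / \<tau> + \<nu> / 2 * tint (\<lambda>x. lap d x * lap d x) - s * grad_L2sq d"
    using d tint_lap_mult[OF lap_trig_poly[OF d] d] tint_lap_mult[OF d d]
    by (subst tint_linear3) (auto intro: trig_poly.mult lap_trig_poly simp: grad_L2sq_eq_tint_inner)
  finally show ?thesis unfolding s_def by (simp add: tint_def)
qed

lemma energy_step_estimate:
  assumes "0 < \<nu>" "0 < \<tau>" and hn: "hn \<in> XN N" and hs: "hs \<in> XN N"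
    and scheme: "\<And>x. (hs x - hn x) / \<tau> = - \<nu> * lap (lap hs) x + A * lap (\<lambda>y. hs y - hn y) x
      + PiN N (dvg (\<lambda>y. gnl (grad hn y))) x"
  shows "energy \<nu> hs - energy \<nu> hn + (A + 1/2 + sqrt (2 * \<nu> / \<tau>)) * grad_L2sq (\<lambda>x. hs x - hn x)
    \<le> grad_L2sq (\<lambda>x. hs x - hn x) * (3/2) * max ((grad_Linf hn)\<^sup>2) ((grad_Linf hs)\<^sup>2)"
proof -
  define d where "d = (\<lambda>x. hs x - hn x)"
  define M where "M = max ((grad_Linf hn)\<^sup>2) ((grad_Linf hs)\<^sup>2)"
  have XT: "XN N \<subseteq> trig_poly" by (rule proj_subspaceD(1)[OF proj_subspace_XN])
  have T: "hn \<in> trig_poly" "hs \<in> trig_poly" "d \<in> trig_poly"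
    using hn hs XT unfolding d_def by (auto intro: trig_poly_diff)
  have "norm (grad f x) ^ 2 \<le> M" if "f \<in> {hn, hs}" for f x
    using power_mono[OF norm_grad_le_grad_Linf norm_ge_zero, of f x 2] that T
    unfolding M_def by auto
  then have "energy \<nu> hs - energy \<nu> hn
      \<le> tint (\<lambda>x. gnl (grad hn x) \<bullet> grad d x) + \<nu> * tint (\<lambda>x. lap hs x * lap d x)
        - \<nu> / 2 * tint (\<lambda>x. lap d x * lap d x) + (3/2 * M - 1/2) * grad_L2sq d"
    unfolding d_def using T by (intro energy_increment_le) auto
  moreover have "tint (\<lambda>x. d x * d x) / \<tau> = - \<nu> * tint (\<lambda>x. lap hs x * lap d x)
      - A * grad_L2sq d - tint (\<lambda>x. gnl (grad hn x) \<bullet> grad d x)"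
    unfolding d_def using hn hs scheme by (rule scheme_tested_with_increment)
  moreover have "sqrt (2 * \<nu> / \<tau>) * grad_L2sq d
      \<le> tint (\<lambda>x. d x * d x) / \<tau> + \<nu> / 2 * tint (\<lambda>x. lap d x * lap d x)"
    using assms(1,2) T(3) by (intro tint_increment_cross_term) auto
  ultimately show ?thesis
    unfolding d_def[symmetric] M_def[symmetric] by (simp add: algebra_simps)
qed

theorem lemma2p4:
  fixes \<nu> \<tau> A :: real and N :: nat
    and h0 :: "real^2 \<Rightarrow> real" and h :: "nat \<Rightarrow> real^2 \<Rightarrow> real"
  assumes "\<nu> > 0" and "\<tau> > 0" and "A > 0" and "N \<ge> 2"
    and "periodic2 h0"
    and "h0 integrable_on torus_box"
    and "(\<lambda>x. (h0 x)^2) integrable_on torus_box"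
    and "tint h0 = 0"
    and "h 0 = PiN N h0"
    and "\<And>n. h n \<in> XN N"
    and "\<And>n x. (h (Suc n) x - h n x) / \<tau> =
            - \<nu> * lap (lap (h (Suc n))) x
            + A * lap (\<lambda>y. h (Suc n) y - h n y) x
            + PiN N (dvg (\<lambda>y. gnl (grad (h n) y))) x"
  shows "energy \<nu> (h (Suc n)) - energy \<nu> (h n)
           + (A + 1/2 + sqrt (2 * \<nu> / \<tau>)) * grad_L2sq (\<lambda>x. h (Suc n) x - h n x)
         \<le> grad_L2sq (\<lambda>x. h (Suc n) x - h n x) * (3/2)
             * max ((grad_Linf (h n))^2) ((grad_Linf (h (Suc n)))^2)"
  using assms(1,2,10,10,11) by (rule energy_step_estimate)

end
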